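(* Let $\Gamma$ be a groupoid over a set $B$ with source and target maps $\alpha,\beta:\Gamma\to B$, and let $L\subset\Gamma$. The following are equivalent: (1) there is a subset $K\subset\Gamma$ such that $LK=E_\Gamma$ and $KL=E_\Gamma$; (2) the restrictions $\alpha|_L:L\to B$ and $\beta|_L:L\to B$ are bijections.
   Context: A groupoid over a set $B$ is a set $\Gamma$ with surjections $\alpha,\beta:\Gamma\to B$, a product $\gamma_1\gamma_2$ defined when $\beta(\gamma_1)=\alpha(\gamma_2)$, identities $e_b$ ($b\in B$) and inverses $\gamma^{-1}$, satisfying $\alpha(\gamma_1\gamma_2)=\alpha(\gamma_1)$, $\beta(\gamma_1\gamma_2)=\beta(\gamma_2)$, $\alpha(e_b)=\beta(e_b)=b$, $\alpha(\gamma^{-1})=\beta(\gamma)$, $\beta(\gamma^{-1})=\alpha(\gamma)$, and the usual associativity, unit and inverse axioms. For subsets $L_1,L_2\subset\Gamma$, $L_1L_2=\{\gamma_1\gamma_2:\gamma_1\in L_1,\gamma_2\in L_2,\beta(\gamma_1)=\alpha(\gamma_2)\}$, and $E_\Gamma=\{e_b:b\in B\}$. *)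

theory Defs
  imports Main
begin

text \<open>A groupoid over a set B: carrier G, source/target maps src (alpha) and tgt (beta),
  a partial product mul (meaningful only when tgt g1 = src g2), identities e, inverses iv.\<close>

locale groupoid =
  fixes G :: "'g set" and B :: "'b set"
    and src :: "'g \<Rightarrow> 'b" and tgt :: "'g \<Rightarrow> 'b"
    and mul :: "'g \<Rightarrow> 'g \<Rightarrow> 'g"
    and e :: "'b \<Rightarrow> 'g" and iv :: "'g \<Rightarrow> 'g"
  assumes src_surj: "src ` G = B" and tgt_surj: "tgt ` G = B"
    and mul_closed: "\<lbrakk>g1 \<in> G; g2 \<in> G; tgt g1 = src g2\<rbrakk> \<Longrightarrow> mul g1 g2 \<in> G"
    and src_mul: "\<lbrakk>g1 \<in> G; g2 \<in> G; tgt g1 = src g2\<rbrakk> \<Longrightarrow> src (mul g1 g2) = src g1"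
    and tgt_mul: "\<lbrakk>g1 \<in> G; g2 \<in> G; tgt g1 = src g2\<rbrakk> \<Longrightarrow> tgt (mul g1 g2) = tgt g2"
    and mul_assoc: "\<lbrakk>g1 \<in> G; g2 \<in> G; g3 \<in> G; tgt g1 = src g2; tgt g2 = src g3\<rbrakk>
        \<Longrightarrow> mul (mul g1 g2) g3 = mul g1 (mul g2 g3)"
    and e_closed: "b \<in> B \<Longrightarrow> e b \<in> G"
    and src_e: "b \<in> B \<Longrightarrow> src (e b) = b"
    and tgt_e: "b \<in> B \<Longrightarrow> tgt (e b) = b"
    and e_left: "g \<in> G \<Longrightarrow> mul (e (src g)) g = g"
    and e_right: "g \<in> G \<Longrightarrow> mul g (e (tgt g)) = g"
    and inv_closed: "g \<in> G \<Longrightarrow> iv g \<in> G"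
    and src_inv: "g \<in> G \<Longrightarrow> src (iv g) = tgt g"
    and tgt_inv: "g \<in> G \<Longrightarrow> tgt (iv g) = src g"
    and inv_left: "g \<in> G \<Longrightarrow> mul (iv g) g = e (tgt g)"
    and inv_right: "g \<in> G \<Longrightarrow> mul g (iv g) = e (src g)"
begin

definition setmul :: "'g set \<Rightarrow> 'g set \<Rightarrow> 'g set" where
  "setmul L1 L2 = {mul g1 g2 | g1 g2. g1 \<in> L1 \<and> g2 \<in> L2 \<and> tgt g1 = src g2}"

definition units :: "'g set" where
  "units = e ` B"

end

end

theory Submission
  imports Defs
begin

text \<open>If \<open>LK = KL = E\<close>, every composable product \<open>l k\<close> or \<open>k l\<close> with \<open>l \<in> L\<close>, \<open>k \<in> K\<close> is an
  identity, so composable elements of \<open>L\<close> and \<open>K\<close> are mutual inverses. For \<open>l1, l2 \<in> L\<close> with the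
  same source pick \<open>k \<in> K\<close> starting at the target of \<open>l1\<close> (the identity there lies in \<open>KL\<close>); then
  \<open>k = l1\<inverse>\<close> ends at the source of \<open>l2\<close>, so \<open>k = l2\<inverse>\<close> as well and \<open>l1 = l2\<close>. Surjectivity of
  \<open>\<alpha>\<close> on \<open>L\<close> comes from \<open>E \<subseteq> LK\<close>. Conversely, if \<open>\<alpha>\<close> and \<open>\<beta>\<close> are bijective on \<open>L\<close>, then
  \<open>K = L\<inverse>\<close> works, because \<open>l l'\<inverse>\<close> is defined only when \<open>l\<close> and \<open>l'\<close> have the same target, i.e.
  \<open>l = l'\<close>. In both directions the claim for \<open>\<beta>\<close> is the claim for \<open>\<alpha>\<close> in the opposite groupoid.\<close>

context groupoid
begin

lemma opposite_groupoid: "groupoid G B tgt src (\<lambda>g h. mul h g) e iv"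
  by unfold_locales
    (simp_all add: src_surj tgt_surj mul_closed src_mul tgt_mul mul_assoc e_closed src_e tgt_e
      e_left e_right inv_closed src_inv tgt_inv inv_left inv_right)

lemma setmul_opposite: "groupoid.setmul tgt src (\<lambda>g h. mul h g) X Y = setmul Y X"
  unfolding groupoid.setmul_def[OF opposite_groupoid] setmul_def by (auto 4 4)

lemma setmul_memI: "\<lbrakk>x \<in> X; y \<in> Y; tgt x = src y\<rbrakk> \<Longrightarrow> mul x y \<in> setmul X Y"
  unfolding setmul_def by blast

lemma setmul_memE:
  assumes "z \<in> setmul X Y"
  obtains x y where "x \<in> X" "y \<in> Y" "tgt x = src y" "z = mul x y"
  using assms unfolding setmul_def by blast

lemma inv_unique:
  assumes g: "g \<in> G" and h: "h \<in> G" and gh: "tgt g = src h" and unit: "mul g h \<in> units"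
  shows "h = iv g"
proof -
  obtain b where b: "b \<in> B" "mul g h = e b"
    using unit unfolding units_def by blast
  have "b = tgt (iv g)"
    using src_mul[OF g h gh] b src_e tgt_inv g by metis
  have "h = mul (mul (iv g) g) h"
    using e_left[OF h] inv_left[OF g] gh by simp
  also have "\<dots> = mul (iv g) (mul g h)"
    using mul_assoc g h gh inv_closed tgt_inv by simp
  also have "\<dots> = iv g"
    using b \<open>b = tgt (iv g)\<close> e_right inv_closed g by simp
  finally show ?thesis .
qed

lemma inv_inv: "g \<in> G \<Longrightarrow> iv (iv g) = g"
  using inv_unique[of "iv g" g] inv_closed tgt_inv inv_left tgt_surj
  unfolding units_def by (metis image_eqI)

lemma src_image_eq_if_units_subset:
  assumes "X \<subseteq> G" "Y \<subseteq> G" "units \<subseteq> setmul X Y"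
  shows "src ` X = B"
proof
  show "src ` X \<subseteq> B"
    using assms(1) src_surj by blast
  show "B \<subseteq> src ` X"
  proof
    fix b assume "b \<in> B"
    then have "e b \<in> setmul X Y"
      using assms(3) unfolding units_def by blast
    then obtain x y where "x \<in> X" "y \<in> Y" "tgt x = src y" "e b = mul x y"
      by (rule setmul_memE)
    then have "src x = b"
      using src_mul src_e \<open>b \<in> B\<close> assms(1,2) by (metis subsetD)
    then show "b \<in> src ` X"
      using \<open>x \<in> X\<close> by blast
  qed
qed

lemma inj_on_src_if_inverse_set:
  assumes L: "L \<subseteq> G" and K: "K \<subseteq> G" and LK: "setmul L K = units" and KL: "setmul K L = units"
  shows "inj_on src L"
proof (rule inj_onI)
  fix l1 l2 assume l: "l1 \<in> L" "l2 \<in> L" "src l1 = src l2"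
  have "tgt l1 \<in> src ` K"
    using src_image_eq_if_units_subset[OF K L] KL tgt_surj l L by blast
  then obtain k where k: "k \<in> K" "src k = tgt l1"
    by (metis imageE)
  have "mul l1 k \<in> units"
    using setmul_memI[of l1 L k K] LK k l by simp
  then have "k = iv l1"
    using inv_unique[of l1 k] k l L K by auto
  then have "tgt k = src l2"
    using tgt_inv l L by auto
  then have "mul k l2 \<in> units"
    using setmul_memI[of k K l2 L] KL k l by simp
  then have "l2 = iv k"
    using inv_unique[of k l2] \<open>tgt k = src l2\<close> k l L K by auto
  then show "l1 = l2"
    using \<open>k = iv l1\<close> inv_inv l L by auto
qed

lemma bij_betw_src_if_inverse_set:
  "\<lbrakk>L \<subseteq> G; K \<subseteq> G; setmul L K = units; setmul K L = units\<rbrakk> \<Longrightarrow> bij_betw src L B"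
  unfolding bij_betw_def
  by (simp add: inj_on_src_if_inverse_set src_image_eq_if_units_subset)

lemma bij_betw_tgt_if_inverse_set:
  "\<lbrakk>L \<subseteq> G; K \<subseteq> G; setmul L K = units; setmul K L = units\<rbrakk> \<Longrightarrow> bij_betw tgt L B"
  using groupoid.bij_betw_src_if_inverse_set[OF opposite_groupoid, of L K]
  unfolding setmul_opposite by simp

lemma setmul_inv_image_eq_units:
  assumes L: "L \<subseteq> G" and inj: "inj_on tgt L" and onto: "src ` L = B"
  shows "setmul L (iv ` L) = units"
proof
  show "setmul L (iv ` L) \<subseteq> units"
  proof
    fix z assume "z \<in> setmul L (iv ` L)"
    then obtain l l' where l: "l \<in> L" "l' \<in> L" "tgt l = src (iv l')" "z = mul l (iv l')"
      by (auto elim: setmul_memE)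
    then have "tgt l = tgt l'"
      using src_inv L by auto
    then have "l = l'"
      using inj l by (auto dest: inj_onD)
    then show "z \<in> units"
      using l inv_right L onto unfolding units_def by auto
  qed
  show "units \<subseteq> setmul L (iv ` L)"
  proof
    fix z assume "z \<in> units"
    then obtain l where "l \<in> L" "z = e (src l)"
      using onto unfolding units_def by auto
    then show "z \<in> setmul L (iv ` L)"
      using setmul_memI[of l L "iv l"] inv_right src_inv L by auto
  qed
qed

lemma inv_image_setmul_eq_units:
  "\<lbrakk>L \<subseteq> G; inj_on src L; tgt ` L = B\<rbrakk> \<Longrightarrow> setmul (iv ` L) L = units"
  using groupoid.setmul_inv_image_eq_units[OF opposite_groupoid, of L]
  unfolding setmul_opposite by simp

end

theorem proposition7:
  fixes G :: "'g set" and B :: "'b set" and L :: "'g set"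
    and src tgt :: "'g \<Rightarrow> 'b" and mul :: "'g \<Rightarrow> 'g \<Rightarrow> 'g"
    and e :: "'b \<Rightarrow> 'g" and iv :: "'g \<Rightarrow> 'g"
  assumes "groupoid G B src tgt mul e iv"
    and "L \<subseteq> G"
  shows "(\<exists>K \<subseteq> G. groupoid.setmul src tgt mul L K = groupoid.units B e
                \<and> groupoid.setmul src tgt mul K L = groupoid.units B e)
         \<longleftrightarrow> (bij_betw src L B \<and> bij_betw tgt L B)"
proof -
  interpret groupoid G B src tgt mul e iv
    by (fact assms(1))
  show ?thesis
  proof
    assume "\<exists>K \<subseteq> G. setmul L K = units \<and> setmul K L = units"
    then obtain K where "K \<subseteq> G" "setmul L K = units" "setmul K L = units"
      by blast
    with assms(2) show "bij_betw src L B \<and> bij_betw tgt L B"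
      by (simp add: bij_betw_src_if_inverse_set bij_betw_tgt_if_inverse_set)
  next
    assume "bij_betw src L B \<and> bij_betw tgt L B"
    then have "setmul L (iv ` L) = units \<and> setmul (iv ` L) L = units"
      using assms(2) unfolding bij_betw_def
      by (simp add: setmul_inv_image_eq_units inv_image_setmul_eq_units)
    moreover have "iv ` L \<subseteq> G"
      using inv_closed assms(2) by blast
    ultimately show "\<exists>K \<subseteq> G. setmul L K = units \<and> setmul K L = units"
      by blast
  qed
qed

end
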